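(* Let $\mathcal{F}$ be a real inner product space with inner product $\langle\cdot,\cdot\rangle$, let $\mathcal{K}:\mathcal{F}\to\mathcal{F}$ be linear, and let $\mathcal{S}\subset\mathcal{F}$ be a subspace with $\dim\mathcal{S}=\dim\mathcal{K}\mathcal{S}=s$. Let $0\le\theta_1\le\dots\le\theta_s\le\pi/2$ be the principal angles between $\mathcal{S}$ and $\mathcal{K}\mathcal{S}$ in increasing order, with principal vectors $u^{\mathcal{S}}_1,\dots,u^{\mathcal{S}}_s\in\mathcal{S}$ and $\mathcal{K}v^{\mathcal{K}\mathcal{S}}_1,\dots,\mathcal{K}v^{\mathcal{K}\mathcal{S}}_s\in\mathcal{K}\mathcal{S}$ (orthonormal families with $\langle u^{\mathcal{S}}_i,\mathcal{K}v^{\mathcal{K}\mathcal{S}}_j\rangle=\delta_{ij}\cos\theta_i$). Let $\Lambda_{\cos}=\mathrm{diag}(\cos\theta_1,\dots,\cos\theta_s)$ and $\Lambda_{\sin}=\mathrm{diag}(\sin\theta_1,\dots,\sin\theta_s)$. Let $\mathcal{S}^{\mathrm{new}}=\mathrm{span}(u^{\mathcal{S}}_1,\dots,u^{\mathcal{S}}_{s-1})$, so $\mathcal{K}\mathcal{S}^{\mathrm{new}}=\mathrm{span}(\mathcal{K}u^{\mathcal{S}}_1,\dots,\mathcal{K}u^{\mathcal{S}}_{s-1})$. Let $WR=[\mathcal{K}u^{\mathcal{S}}_1,\dots,\mathcal{K}u^{\mathcal{S}}_s]$ be a thin QR decomposition, with $W=[w_1,\dots,w_s]$ orthonormal elements of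 $\mathcal{F}$ and $R\in\mathbb{R}^{s\times s}$ upper triangular, and set $\omega=w_s$. Write $\omega=\sum_{i=1}^s d^{\omega}_i\,\mathcal{K}v^{\mathcal{K}\mathcal{S}}_i$ and $d^\omega=[d^\omega_1,\dots,d^\omega_s]^\top$. Define $N_1=\Lambda_{\sin}^2+\Lambda_{\cos}d^\omega(\Lambda_{\cos}d^\omega)^\top\in\mathbb{R}^{s\times s}$, and let $\tilde N_1\in\mathbb{R}^{(s-1)\times(s-1)}$ be obtained by deleting the last row and column of $N_1$. Let $(\lambda_\alpha,z_\alpha)_{\alpha=1}^{s-1}$ be the eigenpairs of $\tilde N_1$ with $\lambda_1\le\dots\le\lambda_{s-1}$ and $z_\alpha$ orthonormal. Then, for every $\alpha=1,\dots,s-1$, $$\sin^2\theta_\alpha(\mathcal{S}^{\mathrm{new}},\mathcal{K}\mathcal{S}^{\mathrm{new}})=\lambda_\alpha,\qquad u^{\mathcal{S}^{\mathrm{new}}}_\alpha=\mathcal{U}_{s-1}z_\alpha,$$ where $\mathcal{U}_{s-1}=[u^{\mathcal{S}}_1,\dots,u^{\mathcal{S}}_{s-1}]$ (so $\mathcal{U}_{s-1}z_\alpha=\sum_{j=1}^{s-1}(z_\alpha)_j u^{\mathcal{S}}_j$) and $\{u^{\mathcal{S}^{\mathrm{new}}}_\alpha\}$ are principal vectors of $\mathcal{S}^{\mathrm{new}}$ with respect to $\mathcal{K}\mathcal{S}^{\mathrm{new}}$.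
   Context: Principal angles and vectors between subspaces $\mathcal{U},\mathcal{V}$ of an inner product space with $k=\min\{\dim\mathcal{U},\dim\mathcal{V}\}$: angles $0\le\theta_1\le\dots\le\theta_k\le\pi/2$ defined recursively by $\cos\theta_j=\max|\langle u,v\rangle|$ over unit $u\in\mathcal{U}$, $v\in\mathcal{V}$ with $u$ orthogonal to $u_1,\dots,u_{j-1}$ and $v$ orthogonal to $v_1,\dots,v_{j-1}$; the maximizers $(u_j,v_j)$ are the $j$-th pair of principal vectors. A thin QR decomposition of a tuple $[f_1,\dots,f_s]$ of elements of $\mathcal{F}$ is $f_j=\sum_{i\le j}R_{ij}w_i$ with $w_1,\dots,w_s$ orthonormal (Gram–Schmidt). *)

theory Defs
  imports "HOL-Analysis.Analysis"
begin

definition principal_system ::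
  "'a::real_inner set \<Rightarrow> 'a set \<Rightarrow> nat \<Rightarrow> (nat \<Rightarrow> 'a) \<Rightarrow> (nat \<Rightarrow> 'a) \<Rightarrow> (nat \<Rightarrow> real) \<Rightarrow> bool"
where
  "principal_system U V k u v \<theta> \<longleftrightarrow>
     (\<forall>j\<in>{1..k}.
        u j \<in> U \<and> v j \<in> V \<and> norm (u j) = 1 \<and> norm (v j) = 1 \<and>
        (\<forall>i\<in>{1..<j}. u j \<bullet> u i = 0 \<and> v j \<bullet> v i = 0) \<and>
        0 \<le> \<theta> j \<and> \<theta> j \<le> pi / 2 \<and>
        u j \<bullet> v j = cos (\<theta> j) \<and>
        (\<forall>x\<in>U. \<forall>y\<in>V. norm x = 1 \<longrightarrow> norm y = 1 \<longrightarrow>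
            (\<forall>i\<in>{1..<j}. x \<bullet> u i = 0 \<and> y \<bullet> v i = 0) \<longrightarrow>
            \<bar>x \<bullet> y\<bar> \<le> cos (\<theta> j)))"

end

theory Submission
  imports Defs
begin

text \<open>For subspaces U, V of the same finite dimension let P be the orthogonal projection onto V.
  A principal system (u, v, \<theta>) of (U, V) diagonalises the quadratic form \<open>|P x|\<^sup>2\<close> on U:
  a first order variation of the defining maximum gives \<open>P (u j) = cos (\<theta> j) v j\<close>. By Ky Fan's
  inequality for partial traces, every orthonormal basis of U that diagonalises this form with
  decreasing values has exactly the values \<open>cos\<^sup>2 (\<theta> j)\<close>; conversely, such a basis is the first
  half of a principal system.

  For \<open>U = span (u 1, ..., u (s-1))\<close> the triangular QR factor gives
  \<open>K U = span (w 1, ..., w (s-1))\<close>, so P is the projection onto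
  \<open>K S = span (K (v 1), ..., K (v s))\<close> minus the projection onto \<open>\<omega> = w s\<close>. In the basis
  u 1, ..., u (s-1) the Gram matrix of the form is therefore the leading block of
  \<open>\<Lambda>\<^sub>c\<^sub>o\<^sub>s\<^sup>2 - (\<Lambda>\<^sub>c\<^sub>o\<^sub>s d) (\<Lambda>\<^sub>c\<^sub>o\<^sub>s d)\<^sup>T = I - N\<^sub>1\<close>, and its orthonormal eigenvectors z \<alpha> give
  principal vectors with \<open>cos\<^sup>2 = 1 - lam \<alpha>\<close>.\<close>

section \<open>Orthonormal families and orthogonal projections\<close>

definition orthonormal_on :: "(nat \<Rightarrow> 'a::real_inner) \<Rightarrow> nat set \<Rightarrow> bool" where
  "orthonormal_on e I \<longleftrightarrow> (\<forall>i\<in>I. \<forall>j\<in>I. e i \<bullet> e j = (if i = j then 1 else 0))"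

definition orthoproj :: "(nat \<Rightarrow> 'a::real_inner) \<Rightarrow> nat set \<Rightarrow> 'a \<Rightarrow> 'a" where
  "orthoproj e I x = (\<Sum>i\<in>I. (x \<bullet> e i) *\<^sub>R e i)"

lemma orthonormal_onD: "orthonormal_on e I \<Longrightarrow> i \<in> I \<Longrightarrow> j \<in> I \<Longrightarrow> e i \<bullet> e j = (if i = j then 1 else 0)"
  unfolding orthonormal_on_def by blast

lemma orthonormal_on_subset: "orthonormal_on e I \<Longrightarrow> J \<subseteq> I \<Longrightarrow> orthonormal_on e J"
  unfolding orthonormal_on_def by blast

lemma orthonormal_on_norm: "orthonormal_on e I \<Longrightarrow> i \<in> I \<Longrightarrow> norm (e i) = 1"
  by (simp add: orthonormal_on_def norm_eq_sqrt_inner)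

lemma orthonormal_on_atLeastAtMostI:
  assumes "\<And>j. j \<in> {1..n} \<Longrightarrow> norm (e j) = 1"
    and "\<And>i j. j \<in> {1..n} \<Longrightarrow> i \<in> {1..<j} \<Longrightarrow> e j \<bullet> e i = 0"
  shows "orthonormal_on e {1..n}"
  unfolding orthonormal_on_def
proof (intro ballI)
  fix i j assume i: "i \<in> {1..n}" and j: "j \<in> {1..n}"
  consider "i < j" | "i = j" | "j < i" by linarith
  then show "e i \<bullet> e j = (if i = j then 1 else 0)"
  proof cases
    case 1 then show ?thesis using assms(2)[OF j, of i] i by (simp add: inner_commute)
  next
    case 2 then show ?thesis using assms(1)[OF i] by (simp add: power2_norm_eq_inner[symmetric])
  next
    case 3 then show ?thesis using assms(2)[OF i, of j] j by simp
  qed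
qed

lemma orthonormal_on_inj_on: "orthonormal_on e I \<Longrightarrow> inj_on e I"
  unfolding orthonormal_on_def inj_on_def by (metis one_neq_zero)

lemma orthonormal_on_card_image: "orthonormal_on e I \<Longrightarrow> card (e ` I) = card I"
  by (simp add: card_image orthonormal_on_inj_on)

lemma orthonormal_on_independent: "orthonormal_on e I \<Longrightarrow> independent (e ` I)"
  by (rule pairwise_orthogonal_independent)
    (auto simp: pairwise_def orthogonal_def orthonormal_on_def, metis zero_neq_one inner_zero_left)

lemma inner_sum_orthonormal:
  assumes "orthonormal_on e I" "finite I" "j \<in> I"
  shows "(\<Sum>i\<in>I. c i *\<^sub>R e i) \<bullet> e j = c j"
proof -
  have "(\<Sum>i\<in>I. c i *\<^sub>R e i) \<bullet> e j = (\<Sum>i\<in>I. if i = j then c i else 0)"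
    using assms(1,3) by (auto simp: inner_sum_left orthonormal_on_def intro: sum.cong)
  then show ?thesis using assms(2,3) by simp
qed

lemma linear_orthoproj: "linear (orthoproj e I)"
  by (rule linearI) (simp_all add: orthoproj_def inner_add_left scaleR_add_left sum.distrib scaleR_sum_right)

lemma orthoproj_in_span: "orthoproj e I x \<in> span (e ` I)"
  unfolding orthoproj_def by (intro span_sum span_scale span_base) auto

lemma inner_orthoproj_left: "orthoproj e I x \<bullet> y = (\<Sum>i\<in>I. (x \<bullet> e i) * (y \<bullet> e i))"
  by (simp add: orthoproj_def inner_sum_left inner_commute[of y])

lemma orthoproj_inner_basis:
  assumes "orthonormal_on e I" "finite I" "j \<in> I"
  shows "orthoproj e I x \<bullet> e j = x \<bullet> e j"
  unfolding orthoproj_def using assms by (rule inner_sum_orthonormal)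

lemma orthoproj_inner_span:
  assumes "orthonormal_on e I" "finite I" "y \<in> span (e ` I)"
  shows "orthoproj e I x \<bullet> y = x \<bullet> y"
  using assms(3)
proof (induction rule: span_induct)
  case (step v) with assms(1,2) show ?case by (auto simp: orthoproj_inner_basis)
qed (auto simp: subspace_def inner_add_right)

lemma orthoproj_inner_orthoproj:
  assumes "orthonormal_on e I" "finite I"
  shows "orthoproj e I x \<bullet> orthoproj e I y = x \<bullet> orthoproj e I y"
  using assms orthoproj_in_span by (rule orthoproj_inner_span)

lemma orthoproj_span_id:
  assumes "orthonormal_on e I" "finite I" "y \<in> span (e ` I)"
  shows "orthoproj e I y = y"
proof -
  have "y - orthoproj e I y \<in> span (e ` I)"
    using assms(3) orthoproj_in_span by (rule span_diff)
  then have "orthoproj e I y \<bullet> (y - orthoproj e I y) = y \<bullet> (y - orthoproj e I y)"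
    by (rule orthoproj_inner_span[OF assms(1,2)])
  then have "(y - orthoproj e I y) \<bullet> (y - orthoproj e I y) = 0"
    by (simp add: inner_diff_left)
  then show ?thesis by simp
qed

lemma orthoproj_eq_if_span_eq:
  assumes "orthonormal_on e I" "finite I" "orthonormal_on e' I'" "finite I'"
    and "span (e ` I) = span (e' ` I')"
  shows "orthoproj e I = orthoproj e' I'"
proof
  fix x
  let ?D = "orthoproj e I x - orthoproj e' I' x"
  have "?D \<in> span (e ` I)"
    using assms(5) orthoproj_in_span[of e I] orthoproj_in_span[of e' I'] by (metis span_diff)
  then have "?D \<bullet> ?D = 0"
    using orthoproj_inner_span[OF assms(1,2)] orthoproj_inner_span[OF assms(3,4)] assms(5)
    by (simp add: inner_diff_left)
  then show "orthoproj e I x = orthoproj e' I' x" by simp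
qed

lemma parseval_orthonormal:
  assumes "orthonormal_on e I" "finite I" "y \<in> span (e ` I)"
  shows "y \<bullet> x = (\<Sum>i\<in>I. (y \<bullet> e i) * (x \<bullet> e i))"
  using inner_orthoproj_left[of e I y x] orthoproj_span_id[OF assms] by simp

lemma bessel_orthonormal:
  assumes "orthonormal_on e I" "finite I"
  shows "(\<Sum>i\<in>I. (x \<bullet> e i)\<^sup>2) \<le> x \<bullet> x"
proof -
  let ?p = "orthoproj e I x"
  have px: "?p \<bullet> x = (\<Sum>i\<in>I. (x \<bullet> e i)\<^sup>2)"
    by (simp add: inner_orthoproj_left power2_eq_square)
  have pp: "?p \<bullet> ?p = ?p \<bullet> x"
    using orthoproj_inner_orthoproj[OF assms, of x x] by (simp add: inner_commute)
  have "0 \<le> (x - ?p) \<bullet> (x - ?p)" by simp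
  also have "\<dots> = x \<bullet> x - ?p \<bullet> x"
    using pp by (simp add: inner_diff inner_commute[of x ?p])
  finally show ?thesis using px by simp
qed

lemma norm_orthoproj_le:
  assumes "orthonormal_on e I" "finite I"
  shows "norm (orthoproj e I x) \<le> norm x"
proof -
  have "(norm (orthoproj e I x))\<^sup>2 = orthoproj e I x \<bullet> x"
    using orthoproj_inner_orthoproj[OF assms, of x x]
    by (simp only: power2_norm_eq_inner inner_commute[of x])
  also have "\<dots> = (\<Sum>i\<in>I. (x \<bullet> e i)\<^sup>2)" by (simp add: inner_orthoproj_left power2_eq_square)
  also have "\<dots> \<le> (norm x)\<^sup>2" using bessel_orthonormal[OF assms] by (simp add: power2_norm_eq_inner)
  finally show ?thesis by (simp add: power2_le_iff_abs_le)
qed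

lemma eq_scaleR_if_norm_le_inner:
  fixes p v :: "'a::real_inner"
  assumes "norm p \<le> c" "p \<bullet> v = c" "norm v = 1"
  shows "p = c *\<^sub>R v"
proof -
  have "v \<bullet> v = 1" using assms(3) by (simp add: norm_eq_1)
  then have "(p - c *\<^sub>R v) \<bullet> (p - c *\<^sub>R v) = p \<bullet> p - c\<^sup>2"
    using assms(2) by (simp add: inner_diff_left inner_diff_right inner_commute[of v p] power2_eq_square)
  also have "p \<bullet> p \<le> c\<^sup>2"
    using power_mono[OF assms(1) norm_ge_zero, of 2] by (simp only: power2_norm_eq_inner)
  finally have "(p - c *\<^sub>R v) \<bullet> (p - c *\<^sub>R v) \<le> 0" by simp
  then have "p - c *\<^sub>R v = 0" by (metis inner_gt_zero_iff not_le)
  then show ?thesis by simp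
qed

lemma span_eq_if_independent_card_ge:
  assumes "independent A" "A \<subseteq> span T" "finite T" "card T \<le> card A"
  shows "span A = span T"
proof -
  have "T \<subseteq> span A"
  proof
    fix x assume "x \<in> T"
    show "x \<in> span A"
    proof (rule ccontr)
      assume x: "x \<notin> span A"
      have "independent (insert x A)" using x assms(1) by (simp add: independent_insert)
      moreover have "insert x A \<subseteq> span T" using \<open>x \<in> T\<close> assms(2) span_base by blast
      ultimately have "finite (insert x A) \<and> card (insert x A) \<le> card T"
        by (rule independent_span_bound[OF assms(3)])
      moreover have "x \<notin> A" using x span_base by blast
      ultimately show False using assms(4) by auto
    qed
  qed
  then have "span T \<subseteq> span A" by (rule span_minimal[OF _ subspace_span])
  with span_minimal[OF assms(2) subspace_span] show ?thesis by (rule subset_antisym)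
qed

lemma orthonormal_on_span_eq:
  assumes "orthonormal_on e I" "finite I" "e ` I \<subseteq> span T" "finite T" "card T \<le> card I"
  shows "span (e ` I) = span T"
  using assms by (intro span_eq_if_independent_card_ge)
    (simp_all add: orthonormal_on_independent orthonormal_on_card_image)

lemma orthonormal_on_exists_orthogonal_unit:
  assumes g: "orthonormal_on g G" "finite G" and b: "orthonormal_on b B" "finite B"
    and bg: "b ` B \<subseteq> span (g ` G)" and card: "card B < card G"
  obtains y where "y \<in> span (g ` G)" "norm y = 1" "\<And>i. i \<in> B \<Longrightarrow> y \<bullet> b i = 0"
proof -
  have "\<not> g ` G \<subseteq> span (b ` B)"
  proof
    assume "g ` G \<subseteq> span (b ` B)"
    then have "card (g ` G) \<le> card (b ` B)"
      using independent_span_bound[OF finite_imageI[OF b(2)] orthonormal_on_independent[OF g(1)]]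
      by blast
    then show False
      using card by (simp add: orthonormal_on_card_image[OF g(1)] orthonormal_on_card_image[OF b(1)])
  qed
  then obtain i where i: "i \<in> G" "g i \<notin> span (b ` B)" by blast
  define r where "r = g i - orthoproj b B (g i)"
  have "r \<in> span (g ` G)"
    unfolding r_def orthoproj_def using i(1) bg
    by (intro span_diff span_sum span_scale) (auto intro: span_base)
  moreover have "r \<noteq> 0" using i(2) orthoproj_in_span[of b B "g i"] by (auto simp: r_def)
  moreover have "r \<bullet> b l = 0" if "l \<in> B" for l
    using orthoproj_inner_basis[OF b that] by (simp add: r_def inner_diff_left)
  ultimately show thesis
    by (intro that[of "r /\<^sub>R norm r"]) (simp_all add: span_scale)
qed

lemma orthonormal_on_extend:
  assumes g: "orthonormal_on g G" "finite G" and b: "orthonormal_on b A" "finite A"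
    and bg: "b ` A \<subseteq> span (g ` G)" and B: "finite B" and card: "card (A \<union> B) \<le> card G"
  obtains b' where "orthonormal_on b' (A \<union> B)" "b' ` (A \<union> B) \<subseteq> span (g ` G)"
    "\<And>i. i \<in> A \<Longrightarrow> b' i = b i"
  using B card
proof (induction B arbitrary: thesis rule: finite_induct)
  case empty then show ?case using b bg by auto
next
  case (insert x B)
  show ?case
  proof (cases "x \<in> A")
    case True
    then have eq: "A \<union> insert x B = A \<union> B" by blast
    show ?thesis by (rule insert.IH[OF insert.prems[unfolded eq]])
  next
    case False
    have fin: "finite (A \<union> B)" using b(2) insert.hyps(1) by simp
    have "card (A \<union> B) < card (A \<union> insert x B)" using False insert.hyps fin by simp
    then have lt: "card (A \<union> B) \<le> card G" "card (A \<union> B) < card G" using insert.prems(2) by linarith+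
    obtain b' where b': "orthonormal_on b' (A \<union> B)" "b' ` (A \<union> B) \<subseteq> span (g ` G)"
      "\<And>i. i \<in> A \<Longrightarrow> b' i = b i"
      using insert.IH lt(1) by blast
    obtain y where y: "y \<in> span (g ` G)" "norm y = 1" "\<And>i. i \<in> A \<union> B \<Longrightarrow> y \<bullet> b' i = 0"
      using orthonormal_on_exists_orthogonal_unit[OF g b'(1) fin b'(2) lt(2)] by blast
    have x: "x \<notin> A \<union> B" using False insert.hyps(2) by simp
    have yy: "y \<bullet> y = 1" using y(2) by (simp add: norm_eq_1)
    have "orthonormal_on (b'(x := y)) (A \<union> insert x B)"
      unfolding orthonormal_on_def
    proof (intro ballI)
      fix i j assume "i \<in> A \<union> insert x B" "j \<in> A \<union> insert x B"
      then show "(b'(x := y)) i \<bullet> (b'(x := y)) j = (if i = j then 1 else 0)"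
        using orthonormal_onD[OF b'(1), of i j] y(3)[of i] y(3)[of j] x yy
        by (cases "i = x"; cases "j = x") (auto simp: inner_commute[of "b' i" y])
    qed
    moreover have "(b'(x := y)) ` (A \<union> insert x B) \<subseteq> span (g ` G)" using b'(2) y(1) by auto
    ultimately show ?thesis
      by (rule insert.prems(1)[of "b'(x := y)"]) (use b'(3) x in auto)
  qed
qed

lemma subspace_eq_span_orthonormal:
  assumes S: "subspace S" and dim: "dim S = card I" "I \<noteq> {}" "finite I"
    and e: "orthonormal_on e I" "e ` I \<subseteq> S"
  shows "S = span (e ` I)"
proof -
  obtain B where B: "B \<subseteq> S" "independent B" "S \<subseteq> span B" "card B = dim S"
    by (rule basis_exists)
  have "finite B" using B(4) dim by (metis card.infinite card_0_eq)
  then have "span (e ` I) = span B"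
    using e B dim by (intro orthonormal_on_span_eq) auto
  then show ?thesis using B(3) span_minimal[OF e(2) S] by blast
qed

lemma orthonormal_on_orthogonal_combination:
  assumes u: "orthonormal_on u J" "finite J"
    and z: "\<And>\<alpha> \<beta>. \<alpha> \<in> A \<Longrightarrow> \<beta> \<in> A \<Longrightarrow> (\<Sum>j\<in>J. z \<alpha> j * z \<beta> j) = (if \<alpha> = \<beta> then 1 else 0)"
  shows "orthonormal_on (\<lambda>\<alpha>. \<Sum>j\<in>J. z \<alpha> j *\<^sub>R u j) A"
  unfolding orthonormal_on_def
proof (intro ballI)
  fix \<alpha> \<beta> assume "\<alpha> \<in> A" "\<beta> \<in> A"
  have "(\<Sum>j\<in>J. z \<alpha> j *\<^sub>R u j) \<bullet> (\<Sum>k\<in>J. z \<beta> k *\<^sub>R u k)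
      = (\<Sum>j\<in>J. z \<alpha> j * ((\<Sum>k\<in>J. z \<beta> k *\<^sub>R u k) \<bullet> u j))"
    by (simp add: inner_sum_left inner_commute[of "u _" "\<Sum>k\<in>J. z \<beta> k *\<^sub>R u k"])
  also have "\<dots> = (\<Sum>j\<in>J. z \<alpha> j * z \<beta> j)" using inner_sum_orthonormal[OF u] by simp
  finally show "(\<Sum>j\<in>J. z \<alpha> j *\<^sub>R u j) \<bullet> (\<Sum>k\<in>J. z \<beta> k *\<^sub>R u k) = (if \<alpha> = \<beta> then 1 else 0)"
    using z \<open>\<alpha> \<in> A\<close> \<open>\<beta> \<in> A\<close> by simp
qed

lemma span_orthogonal_combination:
  assumes u: "orthonormal_on u J" "finite J"
    and z: "\<And>\<alpha> \<beta>. \<alpha> \<in> J \<Longrightarrow> \<beta> \<in> J \<Longrightarrow> (\<Sum>j\<in>J. z \<alpha> j * z \<beta> j) = (if \<alpha> = \<beta> then 1 else 0)"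
  shows "span ((\<lambda>\<alpha>. \<Sum>j\<in>J. z \<alpha> j *\<^sub>R u j) ` J) = span (u ` J)"
  using orthonormal_on_orthogonal_combination[OF u z] u(2) card_image_le[OF u(2), of u]
  by (intro orthonormal_on_span_eq) (auto intro: span_sum span_scale span_base)

lemma independent_if_card_le_dim:
  assumes "finite C" "card C \<le> dim C"
  shows "independent C"
proof -
  obtain A where A: "A \<subseteq> C" "independent A" "C \<subseteq> span A"
    by (rule maximal_independent_subset)
  then have "dim C = card A" using span_mono[OF A(1)] span_minimal[OF A(3) subspace_span]
    by (intro dim_eq_card) auto
  then have "A = C" using A(1) assms by (metis card_seteq)
  then show ?thesis using A(2) by simp
qed

lemma span_eq_if_triangular:
  fixes F w :: "nat \<Rightarrow> 'a::real_vector"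
  assumes ind: "independent (F ` {1..m})" and inj: "inj_on F {1..m}"
    and tri: "\<And>j. j \<in> {1..m} \<Longrightarrow> F j \<in> span (w ` {1..j})"
  shows "span (F ` {1..m}) = span (w ` {1..m})"
proof (rule span_eq_if_independent_card_ge[OF ind])
  show "F ` {1..m} \<subseteq> span (w ` {1..m})"
  proof (rule image_subsetI)
    fix j assume "j \<in> {1..m}"
    moreover have "span (w ` {1..j}) \<subseteq> span (w ` {1..m})"
      using \<open>j \<in> {1..m}\<close> by (intro span_mono image_mono) simp
    ultimately show "F j \<in> span (w ` {1..m})" using tri by blast
  qed
  show "card (w ` {1..m}) \<le> card (F ` {1..m})" using card_image_le[of "{1..m}" w] card_image[OF inj] by simp
qed simp

section \<open>Diagonal Gram matrices and Ky Fan's inequality\<close>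

lemma weighted_sum_le_prefix_sum:
  fixes m W :: "nat \<Rightarrow> real"
  assumes m: "antimono_on {1..n} m"
    and W: "\<And>g. g \<in> {1..n} \<Longrightarrow> 0 \<le> W g" "\<And>g. g \<in> {1..n} \<Longrightarrow> W g \<le> 1"
    and W_sum: "(\<Sum>g=1..n. W g) = real j" and j: "1 \<le> j" "j \<le> n"
  shows "(\<Sum>g=1..n. m g * W g) \<le> (\<Sum>g=1..j. m g)"
proof -
  define ind :: "nat \<Rightarrow> real" where "ind g = (if g \<le> j then 1 else 0)" for g
  have "(m g - m j) * (W g - ind g) \<le> 0" if g: "g \<in> {1..n}" for g
  proof (cases "g \<le> j")
    case True
    then have "m j \<le> m g" using monotone_onD[OF m] g j by auto
    then show ?thesis using True W(2)[OF g] by (simp add: ind_def mult_nonneg_nonpos)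
  next
    case False
    then have "m g \<le> m j" using monotone_onD[OF m] g j by auto
    then show ?thesis using False W(1)[OF g] by (simp add: ind_def mult_nonpos_nonneg)
  qed
  then have "(\<Sum>g=1..n. (m g - m j) * (W g - ind g)) \<le> 0" by (rule sum_nonpos)
  moreover have "{g \<in> {1..n}. g \<le> j} = {1..j}" using j by auto
  then have "(\<Sum>g=1..n. m g * ind g) = (\<Sum>g=1..j. m g)" "(\<Sum>g=1..n. ind g) = real j"
    by (simp_all add: ind_def sum.inter_filter[symmetric] if_distrib[of "\<lambda>t. m _ * t"] cong: if_cong)
  then have "(\<Sum>g=1..n. (m g - m j) * (W g - ind g)) = (\<Sum>g=1..n. m g * W g) - (\<Sum>g=1..j. m g)"
    using W_sum by (simp add: algebra_simps sum.distrib sum_subtractf flip: sum_distrib_left sum_distrib_right)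
  ultimately show ?thesis by linarith
qed

lemma ky_fan_sum_le:
  assumes e: "orthonormal_on e {1..n}" and x: "orthonormal_on x {1..j}"
    and x_span: "x ` {1..j} \<subseteq> span (e ` {1..n})" and "j \<le> n" and m: "antimono_on {1..n} m"
  shows "(\<Sum>i=1..j. \<Sum>g=1..n. m g * (x i \<bullet> e g)\<^sup>2) \<le> (\<Sum>g=1..j. m g)"
proof (cases "j = 0")
  case False
  define W where "W g = (\<Sum>i=1..j. (x i \<bullet> e g)\<^sup>2)" for g
  have "(\<Sum>i=1..j. \<Sum>g=1..n. m g * (x i \<bullet> e g)\<^sup>2) = (\<Sum>g=1..n. m g * W g)"
    unfolding W_def sum_distrib_left by (rule sum.swap)
  also have "\<dots> \<le> (\<Sum>g=1..j. m g)"
  proof (rule weighted_sum_le_prefix_sum[OF m])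
    fix g assume g: "g \<in> {1..n}"
    show "0 \<le> W g" unfolding W_def by (simp add: sum_nonneg)
    have "W g = (\<Sum>i=1..j. (e g \<bullet> x i)\<^sup>2)" unfolding W_def by (simp add: inner_commute)
    also have "\<dots> \<le> e g \<bullet> e g" by (rule bessel_orthonormal[OF x]) simp
    finally show "W g \<le> 1" using orthonormal_onD[OF e g g] by simp
  next
    have "(\<Sum>g=1..n. W g) = (\<Sum>i=1..j. \<Sum>g=1..n. (x i \<bullet> e g)\<^sup>2)"
      unfolding W_def by (rule sum.swap)
    also have "\<dots> = (\<Sum>i=1..j. x i \<bullet> x i)"
    proof (rule sum.cong[OF refl])
      fix i assume "i \<in> {1..j}"
      then have "x i \<in> span (e ` {1..n})" using x_span by blast
      from parseval_orthonormal[OF e _ this, of "x i"]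
      show "(\<Sum>g=1..n. (x i \<bullet> e g)\<^sup>2) = x i \<bullet> x i" by (simp add: power2_eq_square)
    qed
    also have "\<dots> = real j" using orthonormal_onD[OF x] by simp
    finally show "(\<Sum>g=1..n. W g) = real j" .
  qed (use False \<open>j \<le> n\<close> in auto)
  finally show ?thesis .
qed simp

definition gram_diagonal :: "('a::real_inner \<Rightarrow> 'a) \<Rightarrow> (nat \<Rightarrow> 'a) \<Rightarrow> nat set \<Rightarrow> (nat \<Rightarrow> real) \<Rightarrow> bool"
  where "gram_diagonal P e I m \<longleftrightarrow> (\<forall>i\<in>I. \<forall>k\<in>I. P (e i) \<bullet> P (e k) = (if i = k then m i else 0))"

lemma gram_diagonal_quadratic_form:
  assumes P: "linear P" and e: "orthonormal_on e I" "finite I" and diag: "gram_diagonal P e I m"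
    and x: "x \<in> span (e ` I)"
  shows "P x \<bullet> P x = (\<Sum>g\<in>I. m g * (x \<bullet> e g)\<^sup>2)"
proof -
  have Px: "P x = (\<Sum>g\<in>I. (x \<bullet> e g) *\<^sub>R P (e g))"
    using orthoproj_span_id[OF e x] linear_sum[OF P] linear_scale[OF P]
    by (metis (no_types, lifting) orthoproj_def sum.cong)
  have "P (e g) \<bullet> P x = (x \<bullet> e g) * m g" if g: "g \<in> I" for g
  proof -
    have "P (e g) \<bullet> P x = (\<Sum>k\<in>I. if k = g then (x \<bullet> e k) * m g else 0)"
      unfolding Px inner_sum_right using diag g by (intro sum.cong) (auto simp: gram_diagonal_def)
    then show ?thesis using e(2) g by simp
  qed
  then have "(\<Sum>g\<in>I. (x \<bullet> e g) * (P (e g) \<bullet> P x)) = (\<Sum>g\<in>I. m g * (x \<bullet> e g)\<^sup>2)"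
    by (intro sum.cong) (simp_all add: power2_eq_square)
  then show ?thesis by (subst (1) Px) (simp add: inner_sum_left)
qed

lemma gram_diagonal_prefix_sum_le:
  assumes P: "linear P" and e: "orthonormal_on e {1..n}" and e': "orthonormal_on e' {1..n}"
    and span: "e' ` {1..n} \<subseteq> span (e ` {1..n})"
    and diag: "gram_diagonal P e {1..n} m" and diag': "gram_diagonal P e' {1..n} m'"
    and m: "antimono_on {1..n} m" and "j \<le> n"
  shows "(\<Sum>i=1..j. m' i) \<le> (\<Sum>i=1..j. m i)"
proof -
  have "m' i = (\<Sum>g=1..n. m g * (e' i \<bullet> e g)\<^sup>2)" if "i \<in> {1..j}" for i
  proof -
    have i: "i \<in> {1..n}" using that \<open>j \<le> n\<close> by simp
    then have "m' i = P (e' i) \<bullet> P (e' i)" using diag' by (simp add: gram_diagonal_def)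
    also have "\<dots> = (\<Sum>g=1..n. m g * (e' i \<bullet> e g)\<^sup>2)"
      using i span by (intro gram_diagonal_quadratic_form[OF P e _ diag]) auto
    finally show ?thesis .
  qed
  then have "(\<Sum>i=1..j. m' i) = (\<Sum>i=1..j. \<Sum>g=1..n. m g * (e' i \<bullet> e g)\<^sup>2)"
    by (rule sum.cong[OF refl])
  also have "\<dots> \<le> (\<Sum>i=1..j. m i)"
    using span \<open>j \<le> n\<close>
    by (intro ky_fan_sum_le[OF e orthonormal_on_subset[OF e'] _ \<open>j \<le> n\<close> m]) (auto simp: image_subset_iff)
  finally show ?thesis .
qed

lemma gram_diagonal_values_unique:
  assumes P: "linear P" and e: "orthonormal_on e {1..n}" and e': "orthonormal_on e' {1..n}"
    and span: "span (e ` {1..n}) = span (e' ` {1..n})"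
    and diag: "gram_diagonal P e {1..n} m" and diag': "gram_diagonal P e' {1..n} m'"
    and m: "antimono_on {1..n} m" and m': "antimono_on {1..n} m'" and a: "a \<in> {1..n}"
  shows "m a = m' a"
proof -
  have prefix: "(\<Sum>i=1..j. m i) = (\<Sum>i=1..j. m' i)" if "j \<le> n" for j
    using gram_diagonal_prefix_sum_le[OF P e e' _ diag diag' m that]
      gram_diagonal_prefix_sum_le[OF P e' e _ diag' diag m' that] span span_superset
    by (metis antisym)
  obtain b where "a = Suc b" using a by (cases a) auto
  then show ?thesis using prefix[of a] prefix[of b] a by simp
qed

lemma gram_diagonal_norm_le:
  assumes P: "linear P" and f: "orthonormal_on f {1..n}" and diag: "gram_diagonal P f {1..n} \<mu>"
    and \<mu>: "antimono_on {1..n} \<mu>" and j: "j \<in> {1..n}"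
    and x: "x \<in> span (f ` {1..n})" "\<And>i. i \<in> {1..<j} \<Longrightarrow> x \<bullet> f i = 0"
  shows "(norm (P x))\<^sup>2 \<le> \<mu> j * (norm x)\<^sup>2"
proof -
  have "(norm (P x))\<^sup>2 = (\<Sum>g=1..n. \<mu> g * (x \<bullet> f g)\<^sup>2)"
    using gram_diagonal_quadratic_form[OF P f _ diag x(1)] by (simp add: power2_norm_eq_inner)
  also have "\<dots> \<le> (\<Sum>g=1..n. \<mu> j * (x \<bullet> f g)\<^sup>2)"
  proof (rule sum_mono)
    fix g assume g: "g \<in> {1..n}"
    show "\<mu> g * (x \<bullet> f g)\<^sup>2 \<le> \<mu> j * (x \<bullet> f g)\<^sup>2"
    proof (cases "g < j")
      case False
      then have "\<mu> g \<le> \<mu> j" using monotone_onD[OF \<mu> j g] by simp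
      then show ?thesis by (simp add: mult_right_mono)
    qed (use x(2) g in simp)
  qed
  also have "\<dots> = \<mu> j * (x \<bullet> x)"
    using parseval_orthonormal[OF f _ x(1), of x] by (simp add: sum_distrib_left power2_eq_square)
  also have "\<dots> = \<mu> j * (norm x)\<^sup>2" by (simp only: power2_norm_eq_inner)
  finally show ?thesis .
qed

lemma gram_diagonal_orthoproj_range:
  assumes g: "orthonormal_on g G" "finite G" and f: "orthonormal_on f I"
    and diag: "gram_diagonal (orthoproj g G) f I \<mu>" and a: "a \<in> I"
  shows "\<mu> a = (norm (orthoproj g G (f a)))\<^sup>2" "0 \<le> \<mu> a" "\<mu> a \<le> 1"
proof -
  show \<mu>: "\<mu> a = (norm (orthoproj g G (f a)))\<^sup>2"
    using diag a by (simp add: gram_diagonal_def power2_norm_eq_inner)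
  then show "0 \<le> \<mu> a" "\<mu> a \<le> 1"
    using norm_orthoproj_le[OF g, of "f a"] orthonormal_on_norm[OF f a] by (simp_all add: power_le_one)
qed

lemma gram_diagonal_orthoproj_partners:
  assumes g: "orthonormal_on g G" "finite G" "card G = n" and f: "orthonormal_on f {1..n}"
    and diag: "gram_diagonal (orthoproj g G) f {1..n} \<mu>"
  obtains v where "orthonormal_on v {1..n}" "v ` {1..n} \<subseteq> span (g ` G)"
    "\<And>a. a \<in> {1..n} \<Longrightarrow> f a \<bullet> v a = sqrt (\<mu> a)"
proof -
  let ?P = "orthoproj g G"
  note \<mu> = gram_diagonal_orthoproj_range[OF g(1,2) f diag]
  \<comment> \<open>Normalise the nonzero projections and complete them to an orthonormal basis.\<close>
  define Pos where "Pos = {a \<in> {1..n}. 0 < \<mu> a}"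
  define b where "b a = ?P (f a) /\<^sub>R sqrt (\<mu> a)" for a
  have "orthonormal_on b Pos"
    using diag by (auto simp: orthonormal_on_def gram_diagonal_def b_def Pos_def) (simp add: field_simps)
  moreover have "b ` Pos \<subseteq> span (g ` G)" unfolding b_def by (auto intro: span_scale orthoproj_in_span)
  moreover have "finite Pos" by (simp add: Pos_def)
  moreover have Pos_un: "Pos \<union> ({1..n} - Pos) = {1..n}" by (auto simp: Pos_def)
  moreover have "card (Pos \<union> ({1..n} - Pos)) \<le> card G" unfolding Pos_un g(3) by simp
  ultimately obtain v where "orthonormal_on v (Pos \<union> ({1..n} - Pos))"
    "v ` (Pos \<union> ({1..n} - Pos)) \<subseteq> span (g ` G)" and v_Pos: "\<And>a. a \<in> Pos \<Longrightarrow> v a = b a"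
    using orthonormal_on_extend[OF g(1,2), of b Pos "{1..n} - Pos"] by blast
  then have v: "orthonormal_on v {1..n}" "v ` {1..n} \<subseteq> span (g ` G)" unfolding Pos_un by auto
  have "f a \<bullet> v a = sqrt (\<mu> a)" if a: "a \<in> {1..n}" for a
  proof -
    have "v a \<in> span (g ` G)" using v(2) a by auto
    then have "f a \<bullet> v a = ?P (f a) \<bullet> v a" by (simp add: orthoproj_inner_span[OF g(1,2)])
    also have "\<dots> = sqrt (\<mu> a)"
    proof (cases "a \<in> Pos")
      case True
      then have "?P (f a) \<bullet> v a = \<mu> a / sqrt (\<mu> a)"
        using v_Pos \<mu>(1)[OF a] by (simp add: b_def power2_norm_eq_inner divide_inverse mult.commute)
      then show ?thesis using \<mu>(2)[OF a] by (simp add: real_div_sqrt)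
    next
      case False
      then show ?thesis using \<mu>(1-2)[OF a] a by (simp add: Pos_def)
    qed
    finally show ?thesis .
  qed
  with v show thesis by (rule that)
qed

lemma gram_diagonal_orthoproj_inner_le:
  assumes g: "orthonormal_on g G" "finite G" and f: "orthonormal_on f {1..n}"
    and diag: "gram_diagonal (orthoproj g G) f {1..n} \<mu>" and \<mu>: "antimono_on {1..n} \<mu>"
    and j: "j \<in> {1..n}"
    and x: "x \<in> span (f ` {1..n})" "norm x = 1" "\<And>i. i \<in> {1..<j} \<Longrightarrow> x \<bullet> f i = 0"
    and y: "y \<in> span (g ` G)" "norm y = 1"
  shows "\<bar>x \<bullet> y\<bar> \<le> sqrt (\<mu> j)"
proof -
  let ?P = "orthoproj g G"
  have "(norm (?P x))\<^sup>2 \<le> \<mu> j"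
    using gram_diagonal_norm_le[OF linear_orthoproj f diag \<mu> j x(1,3)] x(2) by simp
  then have "norm (?P x) \<le> sqrt (\<mu> j)" by (simp add: real_le_rsqrt)
  moreover have "\<bar>x \<bullet> y\<bar> = \<bar>?P x \<bullet> y\<bar>" using orthoproj_inner_span[OF g y(1)] by simp
  moreover have "\<bar>?P x \<bullet> y\<bar> \<le> norm (?P x)" using Cauchy_Schwarz_ineq2[of "?P x" y] y(2) by simp
  ultimately show ?thesis by linarith
qed

section \<open>Principal systems and the projection onto the second subspace\<close>

lemma principal_systemD:
  assumes "principal_system U V n u v \<theta>" and "j \<in> {1..n}"
  shows "u j \<in> U" "v j \<in> V" "u j \<bullet> v j = cos (\<theta> j)"
    and "\<lbrakk>x \<in> U; y \<in> V; norm x = 1; norm y = 1;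
          \<And>i. i \<in> {1..<j} \<Longrightarrow> x \<bullet> u i = 0; \<And>i. i \<in> {1..<j} \<Longrightarrow> y \<bullet> v i = 0\<rbrakk>
         \<Longrightarrow> \<bar>x \<bullet> y\<bar> \<le> cos (\<theta> j)"
  using assms by (auto simp: principal_system_def)

lemma principal_system_cos_nonneg:
  assumes "principal_system U V n u v \<theta>" and "j \<in> {1..n}"
  shows "0 \<le> cos (\<theta> j)"
proof -
  have "0 \<le> \<theta> j" "\<theta> j \<le> pi / 2" using assms by (auto simp: principal_system_def)
  then show ?thesis by (intro cos_ge_zero) auto
qed

lemma principal_system_orthonormal:
  assumes "principal_system U V n u v \<theta>"
  shows "orthonormal_on u {1..n}" "orthonormal_on v {1..n}"
  by (rule orthonormal_on_atLeastAtMostI; use assms in \<open>simp add: principal_system_def\<close>)+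

lemma principal_system_cos_antimono:
  assumes ps: "principal_system U V n u v \<theta>"
  shows "antimono_on {1..n} (\<lambda>j. cos (\<theta> j))"
proof (rule monotone_onI)
  fix a b assume a: "a \<in> {1..n}" and b: "b \<in> {1..n}" and "a \<le> b"
  show "cos (\<theta> b) \<le> cos (\<theta> a)"
  proof (cases "a = b")
    case False
    with \<open>a \<le> b\<close> have "\<And>i. i \<in> {1..<a} \<Longrightarrow> i \<in> {1..<b}" by auto
    then have "\<bar>u b \<bullet> v b\<bar> \<le> cos (\<theta> a)"
      using ps b principal_system_orthonormal[OF ps] orthonormal_on_norm
      by (intro principal_systemD(4)[OF ps a]) (auto simp: principal_system_def)
    then show ?thesis using principal_systemD(3)[OF ps b] by simp
  qed simp
qed

lemma principal_system_inner_le: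
  assumes U: "subspace U" and V: "subspace V" and ps: "principal_system U V n u v \<theta>"
    and j: "j \<in> {1..n}" and x: "x \<in> U" "\<And>i. i \<in> {1..<j} \<Longrightarrow> x \<bullet> u i = 0"
    and y: "y \<in> V" "\<And>i. i \<in> {1..<j} \<Longrightarrow> y \<bullet> v i = 0"
  shows "\<bar>x \<bullet> y\<bar> \<le> cos (\<theta> j) * norm x * norm y"
proof (cases "x = 0 \<or> y = 0")
  case False
  then have "\<bar>(x /\<^sub>R norm x) \<bullet> (y /\<^sub>R norm y)\<bar> \<le> cos (\<theta> j)"
    using x y by (intro principal_systemD(4)[OF ps j] subspace_scale[OF U] subspace_scale[OF V]) auto
  then show ?thesis using False by (simp add: abs_mult field_simps)
qed auto

lemma real_quadratic_bound_imp_zero: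
  fixes a c N :: real
  assumes c: "0 \<le> c" and N: "0 \<le> N" and bound: "\<And>t. (c + t * a)\<^sup>2 \<le> c\<^sup>2 * (1 + t\<^sup>2 * N)"
  shows "a = 0"
proof (rule ccontr)
  assume "a \<noteq> 0"
  define h where "h = 1 / (c * N + 1)"
  have cN: "0 \<le> c * N" using c N by simp
  then have h: "0 < h" "c * N * h \<le> 1" by (simp_all add: h_def)
  have pos: "0 < h * a\<^sup>2" using h \<open>a \<noteq> 0\<close> by simp
  have "(h * a\<^sup>2) * (2 * c + h * a\<^sup>2) \<le> (h * a\<^sup>2) * (c * (c * N * h))"
    using bound[of "h * a"] by (simp add: power2_eq_square algebra_simps)
  then have "2 * c + h * a\<^sup>2 \<le> c * (c * N * h)" using pos by (simp only: mult_le_cancel_left_pos)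
  also have "\<dots> \<le> c" using mult_left_mono[OF h(2) c] by simp
  finally show False using c pos by simp
qed

lemma principal_vector_stationary:
  assumes U: "subspace U" and V: "subspace V" and ps: "principal_system U V n u v \<theta>"
    and j: "j \<in> {1..n}" and x: "x \<in> U" "\<And>i. i \<in> {1..j} \<Longrightarrow> x \<bullet> u i = 0"
  shows "x \<bullet> v j = 0"
proof (rule real_quadratic_bound_imp_zero)
  show "0 \<le> cos (\<theta> j)" by (rule principal_system_cos_nonneg[OF ps j])
  show "0 \<le> x \<bullet> x" by simp
  have u: "orthonormal_on u {1..n}" and v: "orthonormal_on v {1..n}"
    using principal_system_orthonormal[OF ps] by auto
  fix t
  \<comment> \<open>u j + t x still satisfies the constraints of step j, so its inner product with v j is at
    most cos (\<theta> j) times its norm; as this holds for all t, the first order term x \<bullet> v j vanishes.\<close>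
  let ?x = "u j + t *\<^sub>R x"
  have "\<bar>?x \<bullet> v j\<bar> \<le> cos (\<theta> j) * norm ?x * norm (v j)"
  proof (rule principal_system_inner_le[OF U V ps j])
    show "?x \<in> U" using principal_systemD(1)[OF ps j] x(1) U by (simp add: subspace_add subspace_scale)
    show "v j \<in> V" by (rule principal_systemD(2)[OF ps j])
    fix i assume "i \<in> {1..<j}"
    then show "?x \<bullet> u i = 0" "v j \<bullet> v i = 0"
      using orthonormal_onD[OF u, of j i] orthonormal_onD[OF v, of j i] x(2)[of i] j
      by (auto simp: inner_add_left)
  qed
  moreover have "?x \<bullet> v j = cos (\<theta> j) + t * (x \<bullet> v j)"
    using principal_systemD(3)[OF ps j] by (simp add: inner_add_left)
  moreover have "?x \<bullet> ?x = 1 + t\<^sup>2 * (x \<bullet> x)"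
    using orthonormal_onD[OF u j j] x(2)[of j] j
    by (simp add: inner_add_left inner_add_right inner_commute[of x "u j"] power2_eq_square)
  then have "(norm ?x)\<^sup>2 = 1 + t\<^sup>2 * (x \<bullet> x)" by (simp only: power2_norm_eq_inner)
  ultimately have "\<bar>cos (\<theta> j) + t * (x \<bullet> v j)\<bar> \<le> cos (\<theta> j) * norm ?x"
    using orthonormal_on_norm[OF v j] by simp
  then have "(cos (\<theta> j) + t * (x \<bullet> v j))\<^sup>2 \<le> (cos (\<theta> j) * norm ?x)\<^sup>2"
    by (metis abs_le_square_iff abs_of_nonneg norm_ge_zero mult_nonneg_nonneg
        principal_system_cos_nonneg[OF ps j])
  then show "(cos (\<theta> j) + t * (x \<bullet> v j))\<^sup>2 \<le> (cos (\<theta> j))\<^sup>2 * (1 + t\<^sup>2 * (x \<bullet> x))"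
    by (simp only: power_mult_distrib \<open>(norm ?x)\<^sup>2 = _\<close>)
qed

lemma principal_system_orthoproj:
  assumes U: "subspace U" and g: "orthonormal_on g G" "finite G" and V: "V = span (g ` G)"
    and ps: "principal_system U V n u v \<theta>" and j: "j \<in> {1..n}"
  shows "orthoproj g G (u j) = cos (\<theta> j) *\<^sub>R v j"
proof -
  let ?p = "orthoproj g G (u j)" and ?c = "cos (\<theta> j)"
  have u: "orthonormal_on u {1..n}" and v: "orthonormal_on v {1..n}"
    using principal_system_orthonormal[OF ps] by auto
  have p: "?p \<in> V" using V orthoproj_in_span by blast
  have inner_p: "?p \<bullet> y = u j \<bullet> y" if "y \<in> V" for y
    using orthoproj_inner_span[OF g] that V by simp
  \<comment> \<open>By stationarity at the earlier steps, ?p is admissible at step j.\<close>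
  have "\<bar>u j \<bullet> ?p\<bar> \<le> ?c * norm (u j) * norm ?p"
  proof (rule principal_system_inner_le[OF U _ ps j principal_systemD(1)[OF ps j] _ p])
    show "subspace V" unfolding V by (rule subspace_span)
    fix i assume i: "i \<in> {1..<j}"
    show "u j \<bullet> u i = 0" using orthonormal_onD[OF u, of j i] i j by auto
    have "?p \<bullet> v i = u j \<bullet> v i" using inner_p principal_systemD(2)[OF ps] i j by simp
    also have "\<dots> = 0"
      using orthonormal_onD[OF u, of j] i j
      by (intro principal_vector_stationary[OF U _ ps]) (auto simp: V principal_systemD(1)[OF ps j])
    finally show "?p \<bullet> v i = 0" .
  qed
  moreover have "u j \<bullet> ?p = (norm ?p)\<^sup>2"
    using inner_p[OF p] by (simp add: power2_norm_eq_inner inner_commute)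
  ultimately have "(norm ?p)\<^sup>2 \<le> ?c * norm ?p"
    using orthonormal_on_norm[OF u j] by simp
  then have "norm ?p \<le> ?c"
    using principal_system_cos_nonneg[OF ps j]
    by (cases "norm ?p = 0") (auto simp: power2_eq_square intro: mult_right_le_imp_le)
  moreover have "?p \<bullet> v j = ?c"
    using inner_p[OF principal_systemD(2)[OF ps j]] principal_systemD(3)[OF ps j] by simp
  ultimately show ?thesis using orthonormal_on_norm[OF v j] by (rule eq_scaleR_if_norm_le_inner)
qed

lemma principal_system_cos_squared:
  assumes g: "orthonormal_on g G" "finite G" and V: "V = span (g ` G)"
    and f: "orthonormal_on f {1..n}" and U: "U = span (f ` {1..n})"
    and diag: "gram_diagonal (orthoproj g G) f {1..n} \<mu>" and \<mu>: "antimono_on {1..n} \<mu>"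
    and ps: "principal_system U V n u v \<theta>" and a: "a \<in> {1..n}"
  shows "(cos (\<theta> a))\<^sup>2 = \<mu> a"
proof (rule sym, rule gram_diagonal_values_unique[OF linear_orthoproj f _ _ diag _ \<mu> _ a])
  have u: "orthonormal_on u {1..n}" and v: "orthonormal_on v {1..n}"
    using principal_system_orthonormal[OF ps] by auto
  then show "orthonormal_on u {1..n}" by simp
  have "u ` {1..n} \<subseteq> span (f ` {1..n})" using principal_systemD(1)[OF ps] U by auto
  then show "span (f ` {1..n}) = span (u ` {1..n})"
    using orthonormal_on_span_eq[OF u] orthonormal_on_card_image[OF f] by simp
  have "orthoproj g G (u j) = cos (\<theta> j) *\<^sub>R v j" if "j \<in> {1..n}" for j
    using principal_system_orthoproj[OF _ g V ps that] U subspace_span by blast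
  then show "gram_diagonal (orthoproj g G) u {1..n} (\<lambda>j. (cos (\<theta> j))\<^sup>2)"
    using orthonormal_onD[OF v] by (auto simp: gram_diagonal_def power2_eq_square)
  show "antimono_on {1..n} (\<lambda>j. (cos (\<theta> j))\<^sup>2)"
    using monotone_onD[OF principal_system_cos_antimono[OF ps]] principal_system_cos_nonneg[OF ps]
    by (intro monotone_onI) (simp add: power_mono)
qed

lemma principal_system_exists:
  assumes g: "orthonormal_on g G" "finite G" "card G = n" and V: "V = span (g ` G)"
    and f: "orthonormal_on f {1..n}" and U: "U = span (f ` {1..n})"
    and diag: "gram_diagonal (orthoproj g G) f {1..n} \<mu>" and \<mu>: "antimono_on {1..n} \<mu>"
  shows "\<exists>v \<theta>. principal_system U V n f v \<theta>"
proof -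
  obtain v where v: "orthonormal_on v {1..n}" "v ` {1..n} \<subseteq> V"
    and f_v: "\<And>a. a \<in> {1..n} \<Longrightarrow> f a \<bullet> v a = sqrt (\<mu> a)"
    using gram_diagonal_orthoproj_partners[OF g f diag] V by blast
  define \<theta> where "\<theta> a = arccos (sqrt (\<mu> a))" for a
  have cos_\<theta>: "cos (\<theta> a) = sqrt (\<mu> a)" and \<theta>_range: "0 \<le> \<theta> a" "\<theta> a \<le> pi / 2"
    if "a \<in> {1..n}" for a
  proof -
    have "0 \<le> sqrt (\<mu> a)" "sqrt (\<mu> a) \<le> 1"
      using gram_diagonal_orthoproj_range(2-3)[OF g(1,2) f diag that] by simp_all
    then show "cos (\<theta> a) = sqrt (\<mu> a)" "0 \<le> \<theta> a" "\<theta> a \<le> pi / 2"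
      unfolding \<theta>_def by (intro cos_arccos arccos_lbound arccos_le_pi2; linarith)+
  qed
  have "principal_system U V n f v \<theta>"
    unfolding principal_system_def
  proof (intro ballI conjI impI)
    fix j assume j: "j \<in> {1..n}"
    show "f j \<in> U" using U j by (simp add: span_base)
    show "v j \<in> V" using v(2) j by auto
    show "norm (f j) = 1" "norm (v j) = 1" using orthonormal_on_norm f v(1) j by blast+
    show "0 \<le> \<theta> j" "\<theta> j \<le> pi / 2" "f j \<bullet> v j = cos (\<theta> j)" using \<theta>_range f_v cos_\<theta> j by simp_all
    fix i assume "i \<in> {1..<j}"
    then show "f j \<bullet> f i = 0" "v j \<bullet> v i = 0"
      using orthonormal_onD[OF f, of j i] orthonormal_onD[OF v(1), of j i] j by auto
  next
    fix j x y assume "j \<in> {1..n}" "x \<in> U" "y \<in> V" "norm x = 1" "norm y = 1"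
      "\<forall>i\<in>{1..<j}. x \<bullet> f i = 0 \<and> y \<bullet> v i = 0"
    then show "\<bar>x \<bullet> y\<bar> \<le> cos (\<theta> j)"
      using gram_diagonal_orthoproj_inner_le[OF g(1,2) f diag \<mu>] cos_\<theta> U V by simp
  qed
  then show ?thesis by blast
qed

section \<open>Principal angles of the deflated pair\<close>

lemma diagonal_plus_rank_one_form:
  fixes a \<sigma> x y :: "nat \<Rightarrow> real" and l :: real
  assumes "finite J" and eig: "\<And>i. i \<in> J \<Longrightarrow> (\<Sum>j\<in>J. ((if i = j then \<sigma> i else 0) + a i * a j) * y j) = l * y i"
  shows "(\<Sum>i\<in>J. x i * y i * \<sigma> i) + (\<Sum>i\<in>J. a i * x i) * (\<Sum>j\<in>J. a j * y j) = l * (\<Sum>i\<in>J. x i * y i)"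
proof -
  define b where "b = (\<Sum>j\<in>J. a j * y j)"
  have row: "\<sigma> i * y i + a i * b = l * y i" if "i \<in> J" for i
    using eig[OF that] assms(1) that unfolding b_def
    by (simp add: distrib_right sum.distrib if_distrib[of "\<lambda>t. t * y _"] sum_distrib_left mult.assoc
        cong: if_cong)
  have "(\<Sum>i\<in>J. x i * (\<sigma> i * y i + a i * b)) = (\<Sum>i\<in>J. x i * (l * y i))"
    using row by simp
  then show ?thesis unfolding b_def[symmetric]
    by (simp add: algebra_simps sum.distrib sum_distrib_left sum_distrib_right)
qed

locale principal_qr =
  fixes K :: "'a::real_inner \<Rightarrow> 'a" and S :: "'a set" and s :: nat and \<theta> :: "nat \<Rightarrow> real"
    and u v w :: "nat \<Rightarrow> 'a" and R :: "nat \<Rightarrow> nat \<Rightarrow> real" and d :: "nat \<Rightarrow> real"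
  assumes lin: "linear K"
    and subS: "subspace S"
    and s_pos: "1 \<le> s"
    and dimS: "dim S = s"
    and dimKS: "dim (K ` S) = s"
    and princ: "principal_system S (K ` S) s u (\<lambda>i. K (v i)) \<theta>"
    and cross: "\<forall>i\<in>{1..s}. \<forall>j\<in>{1..s}. u i \<bullet> K (v j) = (if i = j then cos (\<theta> i) else 0)"
    and W_on: "\<forall>i\<in>{1..s}. \<forall>j\<in>{1..s}. w i \<bullet> w j = (if i = j then 1 else 0)"
    and QR: "\<forall>j\<in>{1..s}. K (u j) = (\<Sum>i=1..j. R i j *\<^sub>R w i)"
    and d_def: "w s = (\<Sum>i=1..s. d i *\<^sub>R K (v i))"
begin

lemma u_orthonormal: "orthonormal_on u {1..s}"
  and Kv_orthonormal: "orthonormal_on (\<lambda>i. K (v i)) {1..s}"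
  using principal_system_orthonormal[OF princ] by auto

lemma w_orthonormal: "orthonormal_on w {1..s}"
  using W_on by (simp add: orthonormal_on_def)

lemma S_eq_span: "S = span (u ` {1..s})"
  using subS dimS s_pos u_orthonormal principal_systemD(1)[OF princ]
  by (intro subspace_eq_span_orthonormal) auto

lemma KS_eq_span_Kv: "K ` S = span ((\<lambda>i. K (v i)) ` {1..s})"
  using linear_subspace_image[OF lin subS] dimKS s_pos Kv_orthonormal principal_systemD(2)[OF princ]
  by (intro subspace_eq_span_orthonormal) auto

lemma Ku_independent: "independent ((\<lambda>i. K (u i)) ` {1..s})"
  and Ku_inj: "inj_on (\<lambda>i. K (u i)) {1..s}"
proof -
  let ?C = "(\<lambda>i. K (u i)) ` {1..s}"
  have span_C: "span ?C = K ` S"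
    unfolding S_eq_span by (simp add: span_linear_image[OF lin, symmetric] image_image)
  have "card ?C \<le> s" using card_image_le[of "{1..s}" "\<lambda>i. K (u i)"] by simp
  moreover have "s \<le> card ?C" using dim_le_card[of "K ` S" ?C] span_C dimKS by simp
  ultimately have "card ?C = s" by simp
  then show "independent ?C"
    using span_C dimKS dim_span[of ?C] by (intro independent_if_card_le_dim) simp_all
  show "inj_on (\<lambda>i. K (u i)) {1..s}" using \<open>card ?C = s\<close> by (simp add: inj_on_iff_eq_card)
qed

lemma K_span_u_eq_span_w:
  assumes "m \<le> s"
  shows "K ` span (u ` {1..m}) = span (w ` {1..m})"
proof -
  have sub: "{1..m} \<subseteq> {1..s}" using assms by auto
  have "span ((\<lambda>i. K (u i)) ` {1..m}) = span (w ` {1..m})"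
  proof (rule span_eq_if_triangular)
    show "independent ((\<lambda>i. K (u i)) ` {1..m})"
      using Ku_independent by (rule independent_mono) (use sub in auto)
    show "inj_on (\<lambda>i. K (u i)) {1..m}" using Ku_inj sub by (rule inj_on_subset)
    fix j assume "j \<in> {1..m}"
    then have "K (u j) = (\<Sum>i=1..j. R i j *\<^sub>R w i)" using QR sub by auto
    also have "\<dots> \<in> span (w ` {1..j})" by (intro span_sum span_scale span_base) auto
    finally show "K (u j) \<in> span (w ` {1..j})" .
  qed
  then show ?thesis by (simp add: span_linear_image[OF lin, symmetric] image_image)
qed

lemma orthoproj_w_eq_Kv: "orthoproj w {1..s} = orthoproj (\<lambda>i. K (v i)) {1..s}"
  using K_span_u_eq_span_w[of s] S_eq_span KS_eq_span_Kv
  by (intro orthoproj_eq_if_span_eq[OF w_orthonormal _ Kv_orthonormal]) simp_all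

lemma inner_orthoproj_deflated:
  "orthoproj w {1..s-1} x \<bullet> y = orthoproj (\<lambda>i. K (v i)) {1..s} x \<bullet> y - (x \<bullet> w s) * (y \<bullet> w s)"
proof -
  have "{1..s} = insert s {1..s-1}" "s \<notin> {1..s-1}" using s_pos by auto
  then have "orthoproj w {1..s} x \<bullet> y = (x \<bullet> w s) * (y \<bullet> w s) + orthoproj w {1..s-1} x \<bullet> y"
    by (simp add: inner_orthoproj_left)
  then show ?thesis unfolding orthoproj_w_eq_Kv[symmetric] by simp
qed

lemma inner_Kv_combination:
  assumes "k \<in> {1..s}"
  shows "(\<Sum>j=1..s-1. c j *\<^sub>R u j) \<bullet> K (v k) = (if k < s then c k * cos (\<theta> k) else 0)"
proof -
  have "(\<Sum>j=1..s-1. c j *\<^sub>R u j) \<bullet> K (v k) = (\<Sum>j=1..s-1. if j = k then c j * cos (\<theta> j) else 0)"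
    unfolding inner_sum_left using cross assms by (intro sum.cong) auto
  then show ?thesis using assms by (auto simp: sum.delta')
qed

lemma sum_below_s:
  "(\<Sum>k=1..s. if k < s then g k else 0) = (\<Sum>k=1..s-1. g k)"
proof -
  have "{k \<in> {1..s}. k < s} = {1..s-1}" by auto
  then show ?thesis by (simp add: sum.inter_filter[symmetric])
qed

lemma inner_w_last_combination:
  "(\<Sum>j=1..s-1. c j *\<^sub>R u j) \<bullet> w s = (\<Sum>k=1..s-1. cos (\<theta> k) * d k * c k)"
proof -
  have "(\<Sum>j=1..s-1. c j *\<^sub>R u j) \<bullet> w s = (\<Sum>k=1..s. if k < s then cos (\<theta> k) * d k * c k else 0)"
    unfolding d_def inner_sum_right
  proof (rule sum.cong[OF refl])
    fix k assume "k \<in> {1..s}"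
    from inner_Kv_combination[OF this, of c]
    show "(\<Sum>j=1..s-1. c j *\<^sub>R u j) \<bullet> d k *\<^sub>R K (v k) = (if k < s then cos (\<theta> k) * d k * c k else 0)"
      by simp
  qed
  then show ?thesis by (simp only: sum_below_s)
qed

lemma gram_diagonal_new_basis:
  fixes lam :: "nat \<Rightarrow> real" and z :: "nat \<Rightarrow> nat \<Rightarrow> real"
  assumes eig: "\<forall>\<alpha>\<in>{1..s-1}. \<forall>i\<in>{1..s-1}.
                (\<Sum>j=1..s-1. ((if i = j then (sin (\<theta> i))\<^sup>2 else 0)
                                + (cos (\<theta> i) * d i) * (cos (\<theta> j) * d j)) * z \<alpha> j)
                = lam \<alpha> * z \<alpha> i"
    and z_on: "\<forall>\<alpha>\<in>{1..s-1}. \<forall>\<beta>\<in>{1..s-1}.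
                (\<Sum>j=1..s-1. z \<alpha> j * z \<beta> j) = (if \<alpha> = \<beta> then 1 else 0)"
  shows "gram_diagonal (orthoproj w {1..s-1}) (\<lambda>\<alpha>. \<Sum>j=1..s-1. z \<alpha> j *\<^sub>R u j) {1..s-1}
           (\<lambda>\<alpha>. 1 - lam \<alpha>)"
proof -
  let ?J = "{1..s-1}" and ?P = "orthoproj w {1..s-1}"
  define f where "f \<alpha> = (\<Sum>j=1..s-1. z \<alpha> j *\<^sub>R u j)" for \<alpha>
  define A where "A \<alpha> = (\<Sum>k=1..s-1. cos (\<theta> k) * d k * z \<alpha> k)" for \<alpha>
  have Kv: "orthoproj (\<lambda>i. K (v i)) {1..s} (f b) \<bullet> f a
      = (\<Sum>k=1..s-1. z a k * z b k * (cos (\<theta> k))\<^sup>2)" for a b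
  proof -
    have "orthoproj (\<lambda>i. K (v i)) {1..s} (f b) \<bullet> f a
        = (\<Sum>k=1..s. if k < s then z a k * z b k * (cos (\<theta> k))\<^sup>2 else 0)"
      unfolding inner_orthoproj_left
    proof (rule sum.cong[OF refl])
      fix k assume "k \<in> {1..s}"
      from inner_Kv_combination[OF this, of "z a"] inner_Kv_combination[OF this, of "z b"]
      show "f b \<bullet> K (v k) * (f a \<bullet> K (v k)) = (if k < s then z a k * z b k * (cos (\<theta> k))\<^sup>2 else 0)"
        by (simp add: f_def power2_eq_square)
    qed
    then show ?thesis by (simp only: sum_below_s)
  qed
  have w_last: "f a \<bullet> w s = A a" for a
    unfolding f_def A_def by (rule inner_w_last_combination)
  have P: "?P (f a) \<bullet> ?P (f b) = (\<Sum>k\<in>?J. z a k * z b k * (cos (\<theta> k))\<^sup>2) - A a * A b" for a b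
  proof -
    have "?P (f a) \<bullet> ?P (f b) = ?P (f b) \<bullet> f a"
      using orthoproj_inner_orthoproj[OF orthonormal_on_subset[OF w_orthonormal], of ?J "f a" "f b"]
      by (simp add: inner_commute)
    also have "\<dots> = orthoproj (\<lambda>i. K (v i)) {1..s} (f b) \<bullet> f a - (f b \<bullet> w s) * (f a \<bullet> w s)"
      by (rule inner_orthoproj_deflated)
    finally show ?thesis unfolding Kv w_last by simp
  qed
  have "?P (f a) \<bullet> ?P (f b) = (if a = b then 1 - lam a else 0)" if ab: "a \<in> ?J" "b \<in> ?J" for a b
  proof -
    have "(\<Sum>k\<in>?J. z a k * z b k * (sin (\<theta> k))\<^sup>2) + A a * A b = lam b * (\<Sum>k\<in>?J. z a k * z b k)"
      unfolding A_def using eig ab(2)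
      by (intro diagonal_plus_rank_one_form[where a = "\<lambda>i. cos (\<theta> i) * d i"]) simp_all
    moreover have "(\<Sum>k\<in>?J. z a k * z b k * (cos (\<theta> k))\<^sup>2)
        = (\<Sum>k\<in>?J. z a k * z b k) - (\<Sum>k\<in>?J. z a k * z b k * (sin (\<theta> k))\<^sup>2)"
      by (simp add: cos_squared_eq algebra_simps sum_subtractf)
    ultimately show ?thesis using P[of a b] z_on ab by auto
  qed
  then show ?thesis by (simp add: gram_diagonal_def f_def)
qed

end

theorem theorem4:
  fixes K :: "'a::real_inner \<Rightarrow> 'a"
    and S :: "'a set"
    and s :: nat
    and \<theta> :: "nat \<Rightarrow> real"
    and u v w :: "nat \<Rightarrow> 'a"
    and R :: "nat \<Rightarrow> nat \<Rightarrow> real"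
    and d :: "nat \<Rightarrow> real"
    and lam :: "nat \<Rightarrow> real"
    and z :: "nat \<Rightarrow> nat \<Rightarrow> real"
  assumes lin: "linear K"
    and subS: "subspace S"
    and s_pos: "1 \<le> s"
    and dimS: "dim S = s"
    and dimKS: "dim (K ` S) = s"
    and v_in: "\<forall>i\<in>{1..s}. v i \<in> S"
    and princ: "principal_system S (K ` S) s u (\<lambda>i. K (v i)) \<theta>"
    and cross: "\<forall>i\<in>{1..s}. \<forall>j\<in>{1..s}. u i \<bullet> K (v j) = (if i = j then cos (\<theta> i) else 0)"
    and W_on: "\<forall>i\<in>{1..s}. \<forall>j\<in>{1..s}. w i \<bullet> w j = (if i = j then 1 else 0)"
    and QR: "\<forall>j\<in>{1..s}. K (u j) = (\<Sum>i=1..j. R i j *\<^sub>R w i)"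
    and d_def: "w s = (\<Sum>i=1..s. d i *\<^sub>R K (v i))"
    and eig: "\<forall>\<alpha>\<in>{1..s-1}. \<forall>i\<in>{1..s-1}.
                (\<Sum>j=1..s-1. ((if i = j then (sin (\<theta> i))\<^sup>2 else 0)
                                + (cos (\<theta> i) * d i) * (cos (\<theta> j) * d j)) * z \<alpha> j)
                = lam \<alpha> * z \<alpha> i"
    and z_on: "\<forall>\<alpha>\<in>{1..s-1}. \<forall>\<beta>\<in>{1..s-1}.
                (\<Sum>j=1..s-1. z \<alpha> j * z \<beta> j) = (if \<alpha> = \<beta> then 1 else 0)"
    and lam_sorted: "\<forall>\<alpha>\<in>{1..s-1}. \<forall>\<beta>\<in>{1..s-1}. \<alpha> \<le> \<beta> \<longrightarrow> lam \<alpha> \<le> lam \<beta>"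
  shows "(\<forall>u' v' \<theta>'. principal_system (span (u ` {1..s-1})) (K ` span (u ` {1..s-1})) (s-1) u' v' \<theta>'
            \<longrightarrow> (\<forall>\<alpha>\<in>{1..s-1}. (sin (\<theta>' \<alpha>))\<^sup>2 = lam \<alpha>))
       \<and> (\<exists>v' \<theta>'. principal_system (span (u ` {1..s-1})) (K ` span (u ` {1..s-1})) (s-1)
                    (\<lambda>\<alpha>. \<Sum>j=1..s-1. z \<alpha> j *\<^sub>R u j) v' \<theta>')"
proof -
  interpret principal_qr K S s \<theta> u v w R d
    by (rule principal_qr.intro[OF lin subS s_pos dimS dimKS princ cross W_on QR d_def])
  let ?J = "{1..s-1}" and ?f = "\<lambda>\<alpha>. \<Sum>j=1..s-1. z \<alpha> j *\<^sub>R u j"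
  have u: "orthonormal_on u ?J" and w: "orthonormal_on w ?J"
    by (rule orthonormal_on_subset[OF u_orthonormal] orthonormal_on_subset[OF w_orthonormal], simp)+
  have z: "\<And>\<alpha> \<beta>. \<alpha> \<in> ?J \<Longrightarrow> \<beta> \<in> ?J \<Longrightarrow> (\<Sum>j\<in>?J. z \<alpha> j * z \<beta> j) = (if \<alpha> = \<beta> then 1 else 0)"
    using z_on by blast
  have f: "orthonormal_on ?f ?J" by (rule orthonormal_on_orthogonal_combination[OF u _ z]) simp
  have U: "span (u ` ?J) = span (?f ` ?J)" by (rule span_orthogonal_combination[OF u _ z, symmetric]) simp
  have V: "K ` span (u ` ?J) = span (w ` ?J)" by (rule K_span_u_eq_span_w) simp
  have diag: "gram_diagonal (orthoproj w ?J) ?f ?J (\<lambda>\<alpha>. 1 - lam \<alpha>)"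
    by (rule gram_diagonal_new_basis[OF eig z_on])
  have dec: "antimono_on ?J (\<lambda>\<alpha>. 1 - lam \<alpha>)" using lam_sorted by (intro monotone_onI) auto
  show ?thesis
    using principal_system_cos_squared[OF w _ V f U diag dec]
      principal_system_exists[OF w _ _ V f U diag dec]
    by (simp add: sin_squared_eq)
qed

end
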